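(* Every monotone $\upsilon$-quasi-lattice is a $\mu$-quasi-lattice, and its $\upsilon$-quasi-supremum and $\mu$-quasi-supremum of every pair $\{x,y\}$ coincide.
   Context: A pre-ordered Banach space is a real Banach space $X$ with a cone $X_+$ ($X_++X_+\subseteq X_+$, $\lambda X_+\subseteq X_+$ for $\lambda\ge0$); $x\le y$ means $y-x\in X_+$. $X$ is monotone if $0\le x\le y$ implies $\|x\|\le\|y\|$. For $A\subseteq X$, $\upsilon(A)$ is the set of upper bounds and $\mu(A)$ the set of minimal upper bounds ($z\in\upsilon(A)$ such that $A\le w\le z$ implies $w=z$). Let $\sigma_{x,y}(z)=\|z-x\|+\|z-y\|$. A pre-ordered Banach space with closed cone is a $\upsilon$-quasi-lattice (resp. $\mu$-quasi-lattice) if for all $x,y$ the set $\upsilon(\{x,y\})$ (resp. $\mu(\{x,y\})$) is non-empty and contains a unique minimizer of $\sigma_{x,y}$ on that set, called the $\upsilon$-quasi-supremum (resp. $\mu$-quasi-supremum) of $\{x,y\}$. *)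

theory Defs
  imports "HOL-Analysis.Analysis"
begin

definition is_cone :: "'a::real_vector set \<Rightarrow> bool" where
  "is_cone C \<longleftrightarrow> (\<forall>x\<in>C. \<forall>y\<in>C. x + y \<in> C) \<and> (\<forall>x\<in>C. \<forall>l::real. l \<ge> 0 \<longrightarrow> l *\<^sub>R x \<in> C)"

definition cle :: "'a::real_vector set \<Rightarrow> 'a \<Rightarrow> 'a \<Rightarrow> bool" where
  "cle C x y \<longleftrightarrow> y - x \<in> C"

definition is_monotone :: "'a::real_normed_vector set \<Rightarrow> bool" where
  "is_monotone C \<longleftrightarrow> (\<forall>x y. cle C 0 x \<and> cle C x y \<longrightarrow> norm x \<le> norm y)"

definition ubounds :: "'a::real_vector set \<Rightarrow> 'a set \<Rightarrow> 'a set" where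
  "ubounds C A = {z. \<forall>a\<in>A. cle C a z}"

definition minubounds :: "'a::real_vector set \<Rightarrow> 'a set \<Rightarrow> 'a set" where
  "minubounds C A = {z \<in> ubounds C A. \<forall>w. w \<in> ubounds C A \<and> cle C w z \<longrightarrow> w = z}"

definition sigma :: "'a::real_normed_vector \<Rightarrow> 'a \<Rightarrow> 'a \<Rightarrow> real" where
  "sigma x y z = norm (z - x) + norm (z - y)"

definition is_sigma_min :: "'a::real_normed_vector \<Rightarrow> 'a \<Rightarrow> 'a set \<Rightarrow> 'a \<Rightarrow> bool" where
  "is_sigma_min x y S z \<longleftrightarrow> z \<in> S \<and> (\<forall>w\<in>S. sigma x y z \<le> sigma x y w)"

definition upsilon_quasi_lattice :: "'a::banach set \<Rightarrow> bool" where
  "upsilon_quasi_lattice C \<longleftrightarrow> is_cone C \<and> closed C \<and>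
     (\<forall>x y. ubounds C {x, y} \<noteq> {} \<and> (\<exists>!z. is_sigma_min x y (ubounds C {x, y}) z))"

definition mu_quasi_lattice :: "'a::banach set \<Rightarrow> bool" where
  "mu_quasi_lattice C \<longleftrightarrow> is_cone C \<and> closed C \<and>
     (\<forall>x y. minubounds C {x, y} \<noteq> {} \<and> (\<exists>!z. is_sigma_min x y (minubounds C {x, y}) z))"

definition upsilon_qsup :: "'a::banach set \<Rightarrow> 'a \<Rightarrow> 'a \<Rightarrow> 'a" where
  "upsilon_qsup C x y = (THE z. is_sigma_min x y (ubounds C {x, y}) z)"

definition mu_qsup :: "'a::banach set \<Rightarrow> 'a \<Rightarrow> 'a \<Rightarrow> 'a" where
  "mu_qsup C x y = (THE z. is_sigma_min x y (minubounds C {x, y}) z)"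

end

theory Submission
  imports Defs
begin

text \<open>In a monotone space, any upper bound w of {x, y} below an upper bound z is at least as
  close to x and y as z is. Hence the unique \<sigma>-minimiser over all upper bounds admits no smaller
  upper bound, i.e. it is already a minimal upper bound, and minimising \<sigma> over the smaller set
  of minimal upper bounds yields the same point.\<close>

lemma minubounds_subset_ubounds: "minubounds C A \<subseteq> ubounds C A"
  unfolding minubounds_def by blast

lemma monotone_norm_diff_le:
  assumes "is_monotone C" "cle C a w" "cle C w z"
  shows "norm (w - a) \<le> norm (z - a)"
proof -
  have "cle C 0 (w - a)" "cle C (w - a) (z - a)"
    using assms(2,3) unfolding cle_def by simp_all
  then show ?thesis using assms(1) unfolding is_monotone_def by blast
qed

lemma monotone_sigma_le:
  assumes "is_monotone C" "w \<in> ubounds C {x, y}" "cle C w z"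
  shows "sigma x y w \<le> sigma x y z"
  using monotone_norm_diff_le[OF assms(1) _ assms(3), of x] monotone_norm_diff_le[OF assms(1) _ assms(3), of y]
    assms(2) unfolding sigma_def ubounds_def by fastforce

lemma is_sigma_min_subset_iff:
  assumes "is_sigma_min x y S z" "z \<in> T" "T \<subseteq> S"
  shows "is_sigma_min x y T w \<longleftrightarrow> w \<in> T \<and> is_sigma_min x y S w"
  using assms unfolding is_sigma_min_def by (meson order_trans subsetD)

lemma unique_sigma_min_ubounds_in_minubounds:
  assumes mon: "is_monotone C"
    and min: "is_sigma_min x y (ubounds C {x, y}) z"
    and uniq: "\<And>w. is_sigma_min x y (ubounds C {x, y}) w \<Longrightarrow> w = z"
  shows "z \<in> minubounds C {x, y}"
  unfolding minubounds_def
proof (intro CollectI conjI allI impI)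
  show "z \<in> ubounds C {x, y}" using min unfolding is_sigma_min_def by simp
  fix w assume w: "w \<in> ubounds C {x, y} \<and> cle C w z"
  then have "sigma x y w \<le> sigma x y z" using monotone_sigma_le[OF mon] by blast
  with w min have "is_sigma_min x y (ubounds C {x, y}) w"
    unfolding is_sigma_min_def by fastforce
  then show "w = z" by (rule uniq)
qed

lemma monotone_sigma_min_minubounds_iff:
  assumes mon: "is_monotone C"
    and unique: "\<exists>!z. is_sigma_min x y (ubounds C {x, y}) z"
  shows "is_sigma_min x y (minubounds C {x, y}) w \<longleftrightarrow> is_sigma_min x y (ubounds C {x, y}) w"
proof -
  from unique obtain z where min: "is_sigma_min x y (ubounds C {x, y}) z"
    and uniq: "\<And>w. is_sigma_min x y (ubounds C {x, y}) w \<Longrightarrow> w = z" by blast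
  have "z \<in> minubounds C {x, y}"
    using unique_sigma_min_ubounds_in_minubounds[OF mon min uniq] .
  then show ?thesis
    using is_sigma_min_subset_iff[OF min _ minubounds_subset_ubounds] uniq by blast
qed

theorem theorem5p12:
  fixes C :: "'a::banach set"
  assumes "is_monotone C"
    and "upsilon_quasi_lattice C"
  shows "mu_quasi_lattice C \<and> (\<forall>x y. upsilon_qsup C x y = mu_qsup C x y)"
proof -
  have unique: "\<exists>!z. is_sigma_min x y (ubounds C {x, y}) z" for x y
    using assms(2) unfolding upsilon_quasi_lattice_def by blast
  have same_min: "is_sigma_min x y (minubounds C {x, y}) = is_sigma_min x y (ubounds C {x, y})"
    for x y using monotone_sigma_min_minubounds_iff[OF assms(1) unique] by blast
  have "minubounds C {x, y} \<noteq> {}" for x y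
    using unique[of x y] unfolding same_min[symmetric] is_sigma_min_def by blast
  then have "mu_quasi_lattice C"
    using assms(2) unique unfolding mu_quasi_lattice_def upsilon_quasi_lattice_def same_min by blast
  moreover have "upsilon_qsup C x y = mu_qsup C x y" for x y
    unfolding upsilon_qsup_def mu_qsup_def same_min ..
  ultimately show ?thesis by blast
qed

end
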